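(* Let $(X,d)$ be a compact metric space and $\mathcal{W}$ a uniformly bounded open cover of $X$. Let $\mu=\sum_{i=1}^nm_i\delta_{x_i}\in\mathrm{Viet}^{\mathrm{m}}(\mathcal{W})$ (distinct $x_i$, $m_i>0$), let $\mathcal{U}=\{U_1,\dots,U_n\}$ be pairwise disjoint open subsets of $X$ with $x_i\in U_i$ and $\bigcup_iU_i$ contained in an element of $\mathcal{W}$, let $\varepsilon>0$, and let $B(\mu)=\tilde B(\mu)\cap\mathrm{Viet}^{\mathrm{m}}(\mathcal{W})$ where $\tilde B(\mu)$ is an open ball centered at $\mu$ in $P(X)$ with respect to the Wasserstein metric. Define the multivalued map $F\colon P_{\mathcal{U}}\cap B(\mu)\to P(X)$ by $F(\zeta)=\{\nu\in P(\mu,\mathcal{U},\varepsilon) : \mathrm{supp}(\nu)\subseteq\mathrm{supp}(\zeta)\}$. Then for every $\zeta\in P_{\mathcal{U}}\cap B(\mu)$, the set $F(\zeta)$ is non-empty, convex, and closed.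
   Context: $P(X)$ is the space of Borel probability measures on $X$ (with the weak topology, equivalently the Wasserstein metric since $X$ is compact). $\mathrm{Viet}^{\mathrm{m}}(\mathcal{W})\subseteq P(X)$ is the set of finitely supported probability measures whose support is contained in some element of $\mathcal{W}$. For finitely supported $\nu=\sum_jw_j\delta_{a_j}$ and $Y\subseteq X$, $\nu(Y)=\sum_{a_j\in Y}w_j$. $P_U=\{\nu\in\mathrm{Viet}^{\mathrm{m}}(\mathcal{W}):\mathrm{supp}(\nu)\cap U\ne\varnothing\}$, $P_{\mathcal{U}}=\bigcap_iP_{U_i}$, and $P(\mu,\mathcal{U},\varepsilon)=\{\nu\in\mathrm{Viet}^{\mathrm{m}}(\mathcal{W}) : \mathrm{supp}(\nu)\subseteq\bigcup_iU_i,\ |\nu(U_i)-\mu(U_i)|\le\varepsilon\ \forall i\}$. *)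

theory Defs
  imports "HOL-Probability.Probability"
begin

definition Pspace :: "'a::metric_space set \<Rightarrow> 'a measure set" where
  "Pspace X = {M. prob_space M \<and> space M = X \<and> sets M = sets (restrict_space borel X)}"

text \<open>Weak topology on P(X): initial topology of the maps M \<mapsto> integral of f, f continuous on X.\<close>
definition Cfun :: "'a::metric_space set \<Rightarrow> ('a \<Rightarrow> real) set" where
  "Cfun X = {f. continuous_on X f}"

definition weak_top :: "'a::metric_space set \<Rightarrow> 'a measure topology" where
  "weak_top X = pullback_topology (Pspace X)
      (\<lambda>M. restrict (\<lambda>f. integral\<^sup>L M f) (Cfun X))
      (product_topology (\<lambda>_. euclideanreal) (Cfun X))"

definition couplings :: "'a::metric_space set \<Rightarrow> 'a measure \<Rightarrow> 'a measure \<Rightarrow> ('a \<times> 'a) measure set" where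
  "couplings X M N = {\<pi>. prob_space \<pi> \<and> sets \<pi> = sets (restrict_space borel (X \<times> X))
      \<and> distr \<pi> (restrict_space borel X) fst = M \<and> distr \<pi> (restrict_space borel X) snd = N}"

definition wasserstein :: "'a::metric_space set \<Rightarrow> 'a measure \<Rightarrow> 'a measure \<Rightarrow> real" where
  "wasserstein X M N = Inf ((\<lambda>\<pi>. \<integral>p. dist (fst p) (snd p) \<partial>\<pi>) ` couplings X M N)"

text \<open>Support of a (finitely supported) measure: its atoms.\<close>
definition msupp :: "'a measure \<Rightarrow> 'a set" where
  "msupp M = {a \<in> space M. measure M {a} > 0}"

definition mval :: "'a measure \<Rightarrow> 'a set \<Rightarrow> real" where
  "mval M Y = (\<Sum>a\<in>msupp M \<inter> Y. measure M {a})"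

definition VietM :: "'a::metric_space set \<Rightarrow> 'a set set \<Rightarrow> 'a measure set" where
  "VietM X \<W> = {M \<in> Pspace X. finite (msupp M) \<and> measure M (X - msupp M) = 0
      \<and> (\<exists>W\<in>\<W>. msupp M \<subseteq> W)}"

definition P_U :: "'a::metric_space set \<Rightarrow> 'a set set \<Rightarrow> nat \<Rightarrow> (nat \<Rightarrow> 'a set) \<Rightarrow> 'a measure set" where
  "P_U X \<W> n U = {\<nu> \<in> VietM X \<W>. \<forall>i<n. msupp \<nu> \<inter> U i \<noteq> {}}"

definition P_mu :: "'a::metric_space set \<Rightarrow> 'a set set \<Rightarrow> 'a measure \<Rightarrow> nat \<Rightarrow> (nat \<Rightarrow> 'a set) \<Rightarrow> real
    \<Rightarrow> 'a measure set" where
  "P_mu X \<W> \<mu> n U \<epsilon> = {\<nu> \<in> VietM X \<W>. msupp \<nu> \<subseteq> (\<Union>i<n. U i)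
      \<and> (\<forall>i<n. \<bar>mval \<nu> (U i) - mval \<mu> (U i)\<bar> \<le> \<epsilon>)}"

definition Fmap :: "'a::metric_space set \<Rightarrow> 'a set set \<Rightarrow> 'a measure \<Rightarrow> nat \<Rightarrow> (nat \<Rightarrow> 'a set) \<Rightarrow> real
    \<Rightarrow> 'a measure \<Rightarrow> 'a measure set" where
  "Fmap X \<W> \<mu> n U \<epsilon> \<zeta> = {\<nu> \<in> P_mu X \<W> \<mu> n U \<epsilon>. msupp \<nu> \<subseteq> msupp \<zeta>}"

definition mix :: "real \<Rightarrow> 'a measure \<Rightarrow> 'a measure \<Rightarrow> 'a measure" where
  "mix t M N = measure_of (space M) (sets M)
     (\<lambda>A. ennreal t * emeasure M A + ennreal (1 - t) * emeasure N A)"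

definition mconvex :: "'a measure set \<Rightarrow> bool" where
  "mconvex S \<longleftrightarrow> (\<forall>M\<in>S. \<forall>N\<in>S. \<forall>t\<in>{0..1}. mix t M N \<in> S)"

end

theory Submission
  imports Defs
begin

(* Inside F(\<zeta>) the two support conditions say exactly that \<nu> is concentrated on the finite
   set S = supp \<zeta> \<inter> (\<Union>i. U i), and for such \<nu> the mass condition only involves the numbers
   \<nu>(S \<inter> U i). Both conditions are affine in \<nu>, which gives convexity, and \<Sum>i m i \<delta>(a i) with
   a i \<in> supp \<zeta> \<inter> U i lies in F(\<zeta>). For closedness in the weak topology both conditions are
   expressed by integrals of continuous functions: \<nu> is concentrated on S iff the integral of
   \<Prod>b\<in>S. d(-, b) vanishes, and for such \<nu> the value \<nu>(S \<inter> U i) is the integral of a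
   Lagrange-type interpolant equal to the indicator of U i on S. *)

lemma PspaceD:
  assumes "\<nu> \<in> Pspace X"
  shows "prob_space \<nu>" "space \<nu> = X" "sets \<nu> = sets (restrict_space borel X)"
  using assms by (auto simp: Pspace_def)

lemma VietM_msupp:
  assumes "\<nu> \<in> VietM X \<W>"
  shows "finite (msupp \<nu>)" "msupp \<nu> \<subseteq> X"
  using assms PspaceD(2) by (auto simp: VietM_def msupp_def)

lemma finite_in_sets_Pspace:
  fixes X :: "'a::metric_space set"
  assumes "\<nu> \<in> Pspace X" "finite S" "S \<subseteq> X"
  shows "S \<in> sets \<nu>" "X - S \<in> sets \<nu>"
proof -
  have "S \<in> sets borel" using assms(2) by (simp add: finite_imp_closed borel_closed)
  then have "X \<inter> S \<in> sets (restrict_space borel X)" by (auto simp: sets_restrict_space)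
  then show S: "S \<in> sets \<nu>" using assms PspaceD[OF assms(1)] by (simp add: Int_absorb1)
  show "X - S \<in> sets \<nu>" using sets.compl_sets[OF S] PspaceD(2)[OF assms(1)] by simp
qed

lemma AE_in_finite_iff_Pspace:
  fixes X :: "'a::metric_space set"
  assumes "\<nu> \<in> Pspace X" "finite S" "S \<subseteq> X"
  shows "(AE y in \<nu>. y \<in> S) \<longleftrightarrow> emeasure \<nu> (X - S) = 0"
  by (rule AE_iff_measurable[OF finite_in_sets_Pspace(2)[OF assms]])
     (use PspaceD(2)[OF assms(1)] in auto)

lemma measurable_Pspace_continuous:
  fixes X :: "'a::metric_space set" and f :: "'a \<Rightarrow> real"
  assumes "\<nu> \<in> Pspace X" "continuous_on X f"
  shows "f \<in> borel_measurable \<nu>"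
  using borel_measurable_continuous_on_restrict[OF assms(2)]
  by (simp add: measurable_cong_sets[OF PspaceD(3)[OF assms(1)] refl])

lemma integrable_Pspace_continuous:
  fixes X :: "'a::metric_space set" and f :: "'a \<Rightarrow> real"
  assumes "\<nu> \<in> Pspace X" "compact X" "continuous_on X f"
  shows "integrable \<nu> f"
proof -
  interpret prob_space \<nu> using PspaceD(1)[OF assms(1)] .
  have "bounded (f ` X)" by (rule compact_imp_bounded[OF compact_continuous_image[OF assms(3,2)]])
  then obtain B where B: "\<forall>y\<in>f ` X. norm y \<le> B" unfolding bounded_iff by blast
  show ?thesis
  proof (rule integrable_const_bound[where B=B])
    show "AE y in \<nu>. norm (f y) \<le> B" using B PspaceD(2)[OF assms(1)] by (intro AE_I2) auto
  qed (rule measurable_Pspace_continuous[OF assms(1,3)])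
qed

lemma integral_concentrated_finite:
  fixes X :: "'a::metric_space set" and f :: "'a \<Rightarrow> real"
  assumes \<nu>: "\<nu> \<in> Pspace X" and f: "continuous_on X f" and S: "finite S" "S \<subseteq> X"
    and conc: "emeasure \<nu> (X - S) = 0"
  shows "integral\<^sup>L \<nu> f = (\<Sum>s\<in>S. f s * measure \<nu> {s})"
proof -
  interpret prob_space \<nu> using PspaceD(1)[OF \<nu>] .
  have f_meas: "f \<in> borel_measurable \<nu>" by (rule measurable_Pspace_continuous[OF \<nu> f])
  have S_sets: "T \<in> sets \<nu>" if "T \<subseteq> S" for T
    using finite_in_sets_Pspace(1)[OF \<nu>] S that by (meson finite_subset order_trans)
  have "integral\<^sup>L \<nu> f = integral\<^sup>L \<nu> (\<lambda>y. f y * indicator S y)"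
  proof (rule integral_cong_AE)
    show "AE y in \<nu>. f y = f y * indicator S y"
      using conc AE_in_finite_iff_Pspace[OF \<nu> S] by (auto elim: AE_mp)
  qed (use f_meas S_sets in auto)
  also have "\<dots> = (\<Sum>s\<in>S. f s * measure \<nu> {s})"
    by (rule integral_indicator_finite_real) (use S S_sets in \<open>auto simp: less_top[symmetric]\<close>)
  finally show ?thesis .
qed

lemma msupp_subset_concentrated:
  fixes X :: "'a::metric_space set"
  assumes \<nu>: "\<nu> \<in> Pspace X" and S: "finite S" "S \<subseteq> X" and conc: "emeasure \<nu> (X - S) = 0"
  shows "msupp \<nu> \<subseteq> S"
proof
  fix a assume a: "a \<in> msupp \<nu>"
  then have "a \<in> X" "measure \<nu> {a} \<noteq> 0" using PspaceD(2)[OF \<nu>] by (auto simp: msupp_def)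
  show "a \<in> S"
  proof (rule ccontr)
    assume "a \<notin> S"
    then have "emeasure \<nu> {a} \<le> emeasure \<nu> (X - S)"
      using \<open>a \<in> X\<close> finite_in_sets_Pspace(2)[OF \<nu> S] by (intro emeasure_mono) auto
    then show False using conc \<open>measure \<nu> {a} \<noteq> 0\<close> by (simp add: measure_def)
  qed
qed

lemma mval_concentrated:
  fixes X :: "'a::metric_space set"
  assumes \<nu>: "\<nu> \<in> Pspace X" and S: "finite S" "S \<subseteq> X" and conc: "emeasure \<nu> (X - S) = 0"
  shows "mval \<nu> Y = measure \<nu> (S \<inter> Y)"
proof -
  interpret prob_space \<nu> using PspaceD(1)[OF \<nu>] .
  have "mval \<nu> Y = (\<Sum>a\<in>S \<inter> Y. measure \<nu> {a})"
    unfolding mval_def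
  proof (rule sum.mono_neutral_left)
    show "msupp \<nu> \<inter> Y \<subseteq> S \<inter> Y" using msupp_subset_concentrated[OF assms] by auto
    show "\<forall>a\<in>S \<inter> Y - msupp \<nu> \<inter> Y. measure \<nu> {a} = 0"
      using S PspaceD(2)[OF \<nu>] by (auto simp: msupp_def less_le)
  qed (use S in auto)
  also have "\<dots> = measure \<nu> (S \<inter> Y)"
    by (rule measure_eq_sum_singleton[symmetric])
       (use S finite_in_sets_Pspace(1)[OF \<nu>] in auto)
  finally show ?thesis .
qed

lemma concentrated_on_msupp:
  fixes X :: "'a::metric_space set"
  assumes \<nu>: "\<nu> \<in> Pspace X" and S: "finite S" "S \<subseteq> X" and conc: "emeasure \<nu> (X - S) = 0"
  shows "emeasure \<nu> (X - msupp \<nu>) = 0"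
proof -
  interpret prob_space \<nu> using PspaceD(1)[OF \<nu>] .
  have sub: "msupp \<nu> \<subseteq> S" by (rule msupp_subset_concentrated[OF assms])
  have "measure \<nu> (S - msupp \<nu>) = (\<Sum>a\<in>S - msupp \<nu>. measure \<nu> {a})"
    by (rule measure_eq_sum_singleton) (use S finite_in_sets_Pspace(1)[OF \<nu>] in auto)
  also have "\<dots> = 0"
    using S PspaceD(2)[OF \<nu>] by (intro sum.neutral) (auto simp: msupp_def less_le)
  finally have "S - msupp \<nu> \<in> null_sets \<nu>"
    using finite_in_sets_Pspace(1)[OF \<nu>, of "S - msupp \<nu>"] S
    by (auto simp: emeasure_eq_measure null_sets_def)
  moreover have "X - msupp \<nu> = (X - S) \<union> (S - msupp \<nu>)" using sub S by auto
  ultimately show ?thesis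
    using emeasure_Un_null_set[OF finite_in_sets_Pspace(2)[OF \<nu> S]] conc by simp
qed

lemma VietM_msupp_subset_iff:
  fixes X :: "'a::metric_space set"
  assumes S: "finite S" "S \<subseteq> X" and W: "W \<in> \<W>" "S \<subseteq> W"
  shows "\<nu> \<in> VietM X \<W> \<and> msupp \<nu> \<subseteq> S \<longleftrightarrow> \<nu> \<in> Pspace X \<and> emeasure \<nu> (X - S) = 0"
proof safe
  assume \<nu>: "\<nu> \<in> VietM X \<W>" and sub: "msupp \<nu> \<subseteq> S"
  then have P: "\<nu> \<in> Pspace X" and null: "measure \<nu> (X - msupp \<nu>) = 0"
    by (auto simp: VietM_def)
  interpret prob_space \<nu> using PspaceD(1)[OF P] .
  have supp: "finite (msupp \<nu>)" "msupp \<nu> \<subseteq> X" using sub S by (auto dest: finite_subset)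
  have "emeasure \<nu> (X - S) \<le> emeasure \<nu> (X - msupp \<nu>)"
    using sub finite_in_sets_Pspace(2)[OF P supp] by (intro emeasure_mono) auto
  also have "\<dots> = 0" using null by (simp add: emeasure_eq_measure)
  finally show "emeasure \<nu> (X - S) = 0" by simp
  show "\<nu> \<in> Pspace X" by (rule P)
next
  assume P: "\<nu> \<in> Pspace X" and conc: "emeasure \<nu> (X - S) = 0"
  have sub: "msupp \<nu> \<subseteq> S" by (rule msupp_subset_concentrated[OF P S conc])
  have "measure \<nu> (X - msupp \<nu>) = 0"
    using concentrated_on_msupp[OF P S conc] by (simp add: measure_def)
  then show "\<nu> \<in> VietM X \<W>"
    using P sub S W by (auto simp: VietM_def dest: finite_subset)
  show "x \<in> S" if "x \<in> msupp \<nu>" for x using sub that by blast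
qed

lemma topspace_weak_top: "topspace (weak_top X) = Pspace X"
  by (auto simp: weak_top_def topspace_pullback_topology)

lemma continuous_map_integral_weak_top:
  assumes "f \<in> Cfun X"
  shows "continuous_map (weak_top X) euclideanreal (\<lambda>\<nu>. integral\<^sup>L \<nu> f)"
proof -
  have "continuous_map (weak_top X) euclideanreal
      ((\<lambda>g. g f) \<circ> (\<lambda>M. restrict (\<lambda>f. integral\<^sup>L M f) (Cfun X)))"
    unfolding weak_top_def
    by (rule continuous_map_pullback)
       (rule continuous_map_product_projection[OF assms, of "\<lambda>_. euclideanreal"])
  then show ?thesis using assms by (simp add: o_def)
qed

lemma closedin_weak_top_integral_vimage:
  fixes X :: "'a::metric_space set" and f :: "'a \<Rightarrow> real"
  assumes "continuous_on X f" "closed C"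
  shows "closedin (weak_top X) {\<nu> \<in> Pspace X. integral\<^sup>L \<nu> f \<in> C}"
  using closedin_continuous_map_preimage[OF continuous_map_integral_weak_top, of f X C] assms
  by (simp add: topspace_weak_top Cfun_def)

lemma closedin_all_lessThan:
  assumes "\<And>i. i < n \<Longrightarrow> closedin T {x \<in> topspace T. P i x}"
  shows "closedin T {x \<in> topspace T. \<forall>i<n. P i x}"
proof -
  have "{x \<in> topspace T. \<forall>i<n. P i x} =
      \<Inter> (insert (topspace T) ((\<lambda>i. {x \<in> topspace T. P i x}) ` {..<n}))"
    by auto
  also have "closedin T \<dots>" using assms by (intro closedin_Inter) auto
  finally show ?thesis .
qed

lemma
  assumes "sets N = sets M"
  shows space_mix: "space (mix t M N) = space M"
    and sets_mix: "sets (mix t M N) = sets M"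
    and emeasure_mix:
      "A \<in> sets M \<Longrightarrow> emeasure (mix t M N) A = ennreal t * emeasure M A + ennreal (1 - t) * emeasure N A"
proof -
  let ?f = "\<lambda>A. ennreal t * emeasure M A + ennreal (1 - t) * emeasure N A"
  have ca: "countably_additive (sets M) ?f"
    unfolding countably_additive_def
  proof (intro allI impI)
    fix A :: "nat \<Rightarrow> _" assume A: "range A \<subseteq> sets M" "disjoint_family A" "\<Union> (range A) \<in> sets M"
    have AN: "range A \<subseteq> sets N" using A(1) assms by simp
    have "(\<Sum>i. ?f (A i)) = (\<Sum>i. ennreal t * emeasure M (A i)) + (\<Sum>i. ennreal (1 - t) * emeasure N (A i))"
      by (rule suminf_add[symmetric]) auto
    also have "\<dots> = ?f (\<Union> (range A))"
      using suminf_emeasure[OF A(1,2)] suminf_emeasure[OF AN A(2)] by simp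
    finally show "(\<Sum>i. ?f (A i)) = ?f (\<Union> (range A))" .
  qed
  have pos: "positive (sets M) ?f" by (simp add: positive_def)
  show "emeasure (mix t M N) A = ?f A" if "A \<in> sets M"
    unfolding mix_def by (rule emeasure_measure_of_sigma[OF sets.sigma_algebra_axioms pos ca that])
  show "space (mix t M N) = space M" by (simp add: mix_def space_measure_of_conv)
  show "sets (mix t M N) = sets M" unfolding mix_def
    by (rule sigma_algebra.sets_measure_of_eq[OF sets.sigma_algebra_axioms])
qed

lemma
  assumes "prob_space M" "prob_space N" "sets N = sets M" "0 \<le> t" "t \<le> 1"
  shows prob_space_mix: "prob_space (mix t M N)"
    and measure_mix: "A \<in> sets M \<Longrightarrow> measure (mix t M N) A = t * measure M A + (1 - t) * measure N A"
proof -
  interpret M: prob_space M by fact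
  interpret N: prob_space N by fact
  have em: "emeasure (mix t M N) A = ennreal (t * measure M A + (1 - t) * measure N A)"
    if "A \<in> sets M" for A
    using emeasure_mix[OF assms(3) that] assms(4,5)
    by (simp add: M.emeasure_eq_measure N.emeasure_eq_measure ennreal_mult'' ennreal_plus)
  have "space M \<in> sets M" by simp
  from em[OF this] have "emeasure (mix t M N) (space (mix t M N)) = 1"
    using space_mix[OF assms(3)] sets_eq_imp_space_eq[OF assms(3)] M.prob_space N.prob_space by simp
  then show "prob_space (mix t M N)" by (rule prob_spaceI)
  show "measure (mix t M N) A = t * measure M A + (1 - t) * measure N A" if "A \<in> sets M"
    unfolding measure_def[of "mix t M N"] em[OF that] using assms(4,5) by (subst enn2real_ennreal) auto
qed

lemma mix_in_Pspace:
  assumes "M \<in> Pspace X" "N \<in> Pspace X" "0 \<le> t" "t \<le> 1"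
  shows "mix t M N \<in> Pspace X"
  using prob_space_mix[of M N t] space_mix[of N M t] sets_mix[of N M t] assms
  by (simp add: Pspace_def)

definition dirac_sum ::
    "'a::topological_space set \<Rightarrow> nat \<Rightarrow> (nat \<Rightarrow> real) \<Rightarrow> (nat \<Rightarrow> 'a) \<Rightarrow> 'a measure"
  where "dirac_sum X n w a = measure_of X (sets (restrict_space borel X))
    (\<lambda>A. \<Sum>i<n. ennreal (w i) * indicator A (a i))"

lemma
  fixes X :: "'a::topological_space set"
  shows space_dirac_sum: "space (dirac_sum X n w a) = X"
    and sets_dirac_sum: "sets (dirac_sum X n w a) = sets (restrict_space borel X)"
    and emeasure_dirac_sum: "A \<in> sets (restrict_space borel X) \<Longrightarrow>
      emeasure (dirac_sum X n w a) A = (\<Sum>i<n. ennreal (w i) * indicator A (a i))"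
proof -
  let ?f = "\<lambda>A. \<Sum>i<n. ennreal (w i) * indicator A (a i)"
  have sa: "sigma_algebra X (sets (restrict_space borel X))"
    using sets.sigma_algebra_axioms[of "restrict_space borel X"] by (simp add: space_restrict_space)
  have ca: "countably_additive (sets (restrict_space borel X)) ?f"
    unfolding countably_additive_def
  proof (intro allI impI)
    fix A :: "nat \<Rightarrow> 'a set" assume "disjoint_family A"
    have "(\<Sum>j. ?f (A j)) = (\<Sum>i<n. \<Sum>j. ennreal (w i) * indicator (A j) (a i))"
      by (rule suminf_sum) auto
    also have "\<dots> = ?f (\<Union> (range A))"
      using suminf_indicator[OF \<open>disjoint_family A\<close>] by simp
    finally show "(\<Sum>j. ?f (A j)) = ?f (\<Union> (range A))" .
  qed
  have pos: "positive (sets (restrict_space borel X)) ?f" by (simp add: positive_def)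
  show "emeasure (dirac_sum X n w a) A = ?f A" if "A \<in> sets (restrict_space borel X)"
    unfolding dirac_sum_def by (rule emeasure_measure_of_sigma[OF sa pos ca that])
  show "space (dirac_sum X n w a) = X" by (simp add: dirac_sum_def space_measure_of_conv)
  show "sets (dirac_sum X n w a) = sets (restrict_space borel X)"
    unfolding dirac_sum_def using sa by (rule sigma_algebra.sets_measure_of_eq)
qed

lemma measure_dirac_sum:
  fixes X :: "'a::topological_space set"
  assumes "\<And>i. i < n \<Longrightarrow> w i \<ge> 0" "A \<in> sets (restrict_space borel X)"
  shows "measure (dirac_sum X n w a) A = (\<Sum>i<n. w i * indicator A (a i))"
proof -
  have "(\<Sum>i<n. ennreal (w i) * indicator A (a i)) = (\<Sum>i<n. ennreal (w i * indicator A (a i)))"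
    by (intro sum.cong) (auto simp: indicator_def)
  also have "\<dots> = ennreal (\<Sum>i<n. w i * indicator A (a i))"
    by (rule sum_ennreal) (use assms(1) in auto)
  finally have "emeasure (dirac_sum X n w a) A = ennreal (\<Sum>i<n. w i * indicator A (a i))"
    using emeasure_dirac_sum[OF assms(2)] by simp
  moreover have "(\<Sum>i<n. w i * indicator A (a i)) \<ge> 0" using assms(1) by (intro sum_nonneg) auto
  ultimately show ?thesis by (simp add: measure_def)
qed

lemma dirac_sum_in_Pspace:
  fixes X :: "'a::metric_space set"
  assumes "\<And>i. i < n \<Longrightarrow> a i \<in> X" "\<And>i. i < n \<Longrightarrow> w i \<ge> 0" "(\<Sum>i<n. w i) = 1"
  shows "dirac_sum X n w a \<in> Pspace X"
proof -
  have X: "X \<in> sets (restrict_space borel X)"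
    using sets.top[of "restrict_space borel X"] by (simp add: space_restrict_space)
  have "emeasure (dirac_sum X n w a) X = (\<Sum>i<n. ennreal (w i) * indicator X (a i))"
    by (rule emeasure_dirac_sum[OF X])
  also have "\<dots> = (\<Sum>i<n. ennreal (w i))" using assms(1) by (intro sum.cong) auto
  also have "\<dots> = ennreal (\<Sum>i<n. w i)" by (rule sum_ennreal) (use assms(2) in auto)
  finally have "emeasure (dirac_sum X n w a) X = 1" using assms(3) by simp
  then have "prob_space (dirac_sum X n w a)"
    by (intro prob_spaceI) (simp add: space_dirac_sum)
  then show ?thesis by (simp add: Pspace_def space_dirac_sum sets_dirac_sum)
qed

definition interp_indicator :: "'a::metric_space set \<Rightarrow> 'a set \<Rightarrow> 'a \<Rightarrow> real" where
  "interp_indicator S Y y = (\<Sum>a\<in>S \<inter> Y. \<Prod>b\<in>S - {a}. dist y b / dist a b)"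

lemma interp_indicator_eq:
  assumes "finite S" "s \<in> S"
  shows "interp_indicator S Y s = indicator Y s"
proof -
  have "(\<Prod>b\<in>S - {a}. dist s b / dist a b) = (if s = a then 1 else 0)" if "a \<in> S" for a
  proof (cases "s = a")
    case False
    then have "s \<in> S - {a}" "dist s s / dist a s = 0" using assms by auto
    then show ?thesis using False assms(1) by (metis finite_Diff prod_zero)
  qed (auto intro!: prod.neutral split: if_split_asm)
  then show ?thesis
    unfolding interp_indicator_def using assms by (simp add: indicator_def)
qed

lemma continuous_on_interp_indicator: "continuous_on X (interp_indicator S Y)"
  unfolding interp_indicator_def by (intro continuous_intros) auto

lemma integral_interp_indicator:
  fixes X :: "'a::metric_space set"
  assumes \<nu>: "\<nu> \<in> Pspace X" and S: "finite S" "S \<subseteq> X" and conc: "emeasure \<nu> (X - S) = 0"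
  shows "integral\<^sup>L \<nu> (interp_indicator S Y) = measure \<nu> (S \<inter> Y)"
proof -
  interpret prob_space \<nu> using PspaceD(1)[OF \<nu>] .
  have "integral\<^sup>L \<nu> (interp_indicator S Y) = (\<Sum>s\<in>S. interp_indicator S Y s * measure \<nu> {s})"
    by (rule integral_concentrated_finite[OF \<nu> continuous_on_interp_indicator S conc])
  also have "\<dots> = (\<Sum>s\<in>S \<inter> Y. measure \<nu> {s})"
    using S(1) by (simp add: interp_indicator_eq sum.inter_restrict indicator_def)
  also have "\<dots> = measure \<nu> (S \<inter> Y)"
    by (rule measure_eq_sum_singleton[symmetric]) (use S finite_in_sets_Pspace(1)[OF \<nu>] in auto)
  finally show ?thesis .
qed

lemma concentrated_iff_integral_dist_prod:
  fixes X :: "'a::metric_space set"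
  assumes \<nu>: "\<nu> \<in> Pspace X" and X: "compact X" and S: "finite S" "S \<subseteq> X"
  shows "emeasure \<nu> (X - S) = 0 \<longleftrightarrow> (\<integral>y. (\<Prod>b\<in>S. dist y b) \<partial>\<nu>) = 0"
proof -
  have int: "integrable \<nu> (\<lambda>y. \<Prod>b\<in>S. dist y b)"
    by (rule integrable_Pspace_continuous[OF \<nu> X]) (intro continuous_intros)
  have "(\<integral>y. (\<Prod>b\<in>S. dist y b) \<partial>\<nu>) = 0 \<longleftrightarrow> (AE y in \<nu>. (\<Prod>b\<in>S. dist y b) = 0)"
    by (rule integral_nonneg_eq_0_iff_AE[OF int]) (simp add: prod_nonneg)
  also have "\<dots> \<longleftrightarrow> (AE y in \<nu>. y \<in> S)" using S(1) by (simp add: prod_zero_iff)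
  also have "\<dots> \<longleftrightarrow> emeasure \<nu> (X - S) = 0" by (rule AE_in_finite_iff_Pspace[OF \<nu> S])
  finally show ?thesis by simp
qed

definition mass_constraint_set ::
    "'a::metric_space set \<Rightarrow> 'a set \<Rightarrow> nat \<Rightarrow> (nat \<Rightarrow> 'a set) \<Rightarrow> (nat \<Rightarrow> real) \<Rightarrow> real
      \<Rightarrow> 'a measure set"
  where "mass_constraint_set X S n U m \<epsilon> = {\<nu> \<in> Pspace X. emeasure \<nu> (X - S) = 0
    \<and> (\<forall>i<n. measure \<nu> (S \<inter> U i) \<in> cball (m i) \<epsilon>)}"

lemma mass_constraint_set_nonempty:
  fixes X :: "'a::metric_space set"
  assumes S: "finite S" "S \<subseteq> X"
    and U_disj: "\<And>i j. i < n \<Longrightarrow> j < n \<Longrightarrow> i \<noteq> j \<Longrightarrow> U i \<inter> U j = {}"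
    and meets: "\<And>i. i < n \<Longrightarrow> S \<inter> U i \<noteq> {}"
    and m: "\<And>i. i < n \<Longrightarrow> m i \<ge> 0" "(\<Sum>i<n. m i) = 1" and \<epsilon>: "\<epsilon> \<ge> 0"
  shows "mass_constraint_set X S n U m \<epsilon> \<noteq> {}"
proof -
  have "\<forall>i. \<exists>b. i < n \<longrightarrow> b \<in> S \<inter> U i" using meets by blast
  then obtain a where a: "\<And>i. i < n \<Longrightarrow> a i \<in> S \<inter> U i" by metis
  define \<nu> where "\<nu> = dirac_sum X n m a"
  have \<nu>_P: "\<nu> \<in> Pspace X" unfolding \<nu>_def using a S m by (intro dirac_sum_in_Pspace) auto
  interpret prob_space \<nu> using PspaceD(1)[OF \<nu>_P] .
  have measure_\<nu>: "measure \<nu> T = (\<Sum>j<n. m j * indicator T (a j))" if "T \<in> sets \<nu>" for T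
    using measure_dirac_sum[where X = X and A = T and w = m and a = a] m(1) that
    by (simp add: \<nu>_def sets_dirac_sum)
  have "measure \<nu> (X - S) = (\<Sum>j<n. m j * indicator (X - S) (a j))"
    by (rule measure_\<nu>[OF finite_in_sets_Pspace(2)[OF \<nu>_P S]])
  also have "\<dots> = 0" using a by (intro sum.neutral) auto
  finally have conc: "emeasure \<nu> (X - S) = 0" by (simp add: emeasure_eq_measure)
  have "measure \<nu> (S \<inter> U i) = m i" if i: "i < n" for i
  proof -
    have "S \<inter> U i \<in> sets \<nu>" using finite_in_sets_Pspace(1)[OF \<nu>_P] S by auto
    then have "measure \<nu> (S \<inter> U i) = (\<Sum>j<n. m j * indicator (S \<inter> U i) (a j))"
      by (rule measure_\<nu>)
    also have "\<dots> = (\<Sum>j<n. if j = i then m j else 0)"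
      using a a[OF i] U_disj[OF i] by (intro sum.cong) (auto simp: indicator_def)
    also have "\<dots> = m i" using i by simp
    finally show ?thesis .
  qed
  then have "\<nu> \<in> mass_constraint_set X S n U m \<epsilon>"
    using \<nu>_P conc \<epsilon> by (simp add: mass_constraint_set_def)
  then show ?thesis by blast
qed

lemma mconvex_mass_constraint_set:
  fixes X :: "'a::metric_space set"
  assumes S: "finite S" "S \<subseteq> X"
  shows "mconvex (mass_constraint_set X S n U m \<epsilon>)"
  unfolding mconvex_def
proof (intro ballI)
  fix M N t assume M: "M \<in> mass_constraint_set X S n U m \<epsilon>"
    and N: "N \<in> mass_constraint_set X S n U m \<epsilon>" and t: "t \<in> {0..1::real}"
  have P: "M \<in> Pspace X" "N \<in> Pspace X" using M N by (auto simp: mass_constraint_set_def)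
  have sets: "sets N = sets M" using PspaceD(3)[OF P(1)] PspaceD(3)[OF P(2)] by simp
  have "emeasure (mix t M N) (X - S) = 0"
    using emeasure_mix[OF sets finite_in_sets_Pspace(2)[OF P(1) S]] M N
    by (simp add: mass_constraint_set_def)
  moreover have "measure (mix t M N) (S \<inter> U i) \<in> cball (m i) \<epsilon>" if "i < n" for i
  proof -
    have "S \<inter> U i \<in> sets M" using finite_in_sets_Pspace(1)[OF P(1)] S by auto
    then have "measure (mix t M N) (S \<inter> U i) = t * measure M (S \<inter> U i) + (1 - t) * measure N (S \<inter> U i)"
      using measure_mix[OF PspaceD(1)[OF P(1)] PspaceD(1)[OF P(2)] sets] t by simp
    moreover have "measure M (S \<inter> U i) \<in> cball (m i) \<epsilon>" "measure N (S \<inter> U i) \<in> cball (m i) \<epsilon>"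
      using M N that by (auto simp: mass_constraint_set_def)
    then have "t *\<^sub>R measure M (S \<inter> U i) + (1 - t) *\<^sub>R measure N (S \<inter> U i) \<in> cball (m i) \<epsilon>"
      using t by (intro convexD convex_cball) auto
    ultimately show ?thesis by simp
  qed
  ultimately show "mix t M N \<in> mass_constraint_set X S n U m \<epsilon>"
    using mix_in_Pspace[OF P] t by (simp add: mass_constraint_set_def)
qed

lemma closedin_mass_constraint_set:
  fixes X :: "'a::metric_space set"
  assumes X: "compact X" and S: "finite S" "S \<subseteq> X"
  shows "closedin (weak_top X) (mass_constraint_set X S n U m \<epsilon>)"
proof -
  have "mass_constraint_set X S n U m \<epsilon> =
      {\<nu> \<in> Pspace X. (\<integral>y. (\<Prod>b\<in>S. dist y b) \<partial>\<nu>) \<in> {0}} \<inter>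
      {\<nu> \<in> topspace (weak_top X). \<forall>i<n. integral\<^sup>L \<nu> (interp_indicator S (U i)) \<in> cball (m i) \<epsilon>}"
    using concentrated_iff_integral_dist_prod[OF _ X S] integral_interp_indicator[OF _ S]
    by (auto simp: mass_constraint_set_def topspace_weak_top)
  also have "closedin (weak_top X) \<dots>"
  proof (intro closedin_Int closedin_all_lessThan)
    show "closedin (weak_top X) {\<nu> \<in> Pspace X. (\<integral>y. (\<Prod>b\<in>S. dist y b) \<partial>\<nu>) \<in> {0}}"
      by (intro closedin_weak_top_integral_vimage continuous_intros closed_singleton)
    show "closedin (weak_top X)
        {\<nu> \<in> topspace (weak_top X). integral\<^sup>L \<nu> (interp_indicator S (U i)) \<in> cball (m i) \<epsilon>}" for i
      unfolding topspace_weak_top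
      by (intro closedin_weak_top_integral_vimage continuous_on_interp_indicator closed_cball)
  qed
  finally show ?thesis .
qed

lemma Fmap_eq_mass_constraint_set:
  fixes X :: "'a::metric_space set"
  assumes \<zeta>: "\<zeta> \<in> VietM X \<W>" and W: "W \<in> \<W>" "(\<Union>i<n. U i) \<subseteq> W"
    and mval_\<mu>: "\<And>i. i < n \<Longrightarrow> mval \<mu> (U i) = m i"
  shows "Fmap X \<W> \<mu> n U \<epsilon> \<zeta> = mass_constraint_set X (msupp \<zeta> \<inter> (\<Union>i<n. U i)) n U m \<epsilon>"
proof -
  define S where "S = msupp \<zeta> \<inter> (\<Union>i<n. U i)"
  have S: "finite S" "S \<subseteq> X" "S \<subseteq> W"
    using VietM_msupp[OF \<zeta>] W(2) by (auto simp: S_def)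
  have "\<nu> \<in> Fmap X \<W> \<mu> n U \<epsilon> \<zeta> \<longleftrightarrow> \<nu> \<in> mass_constraint_set X S n U m \<epsilon>" for \<nu>
  proof -
    have "\<nu> \<in> Fmap X \<W> \<mu> n U \<epsilon> \<zeta> \<longleftrightarrow>
        (\<nu> \<in> VietM X \<W> \<and> msupp \<nu> \<subseteq> S) \<and> (\<forall>i<n. \<bar>mval \<nu> (U i) - m i\<bar> \<le> \<epsilon>)"
      by (auto simp: Fmap_def P_mu_def S_def mval_\<mu>)
    also have "\<dots> \<longleftrightarrow>
        (\<nu> \<in> Pspace X \<and> emeasure \<nu> (X - S) = 0) \<and> (\<forall>i<n. \<bar>mval \<nu> (U i) - m i\<bar> \<le> \<epsilon>)"
      using VietM_msupp_subset_iff[OF S(1,2) W(1) S(3)] by simp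
    also have "\<dots> \<longleftrightarrow> \<nu> \<in> mass_constraint_set X S n U m \<epsilon>"
      using mval_concentrated[OF _ S(1,2)]
      by (auto simp: mass_constraint_set_def dist_real_def abs_minus_commute)
    finally show ?thesis .
  qed
  then show ?thesis by (auto simp: S_def)
qed

lemma
  fixes X :: "'a::metric_space set"
  assumes \<mu>: "\<mu> \<in> Pspace X" and x_in: "\<forall>i<n. x i \<in> X" and x_inj: "inj_on x {..<n}"
    and mu_meas: "\<forall>A\<in>sets \<mu>. measure \<mu> A = (\<Sum>i\<in>{i. i < n \<and> x i \<in> A}. m i)"
  shows sum_atom_weights: "(\<Sum>i<n. m i) = 1"
    and measure_atom: "i < n \<Longrightarrow> measure \<mu> {x i} = m i"
    and measure_singleton_not_atom: "a \<notin> x ` {..<n} \<Longrightarrow> a \<in> X \<Longrightarrow> measure \<mu> {a} = 0"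
proof -
  interpret prob_space \<mu> using PspaceD(1)[OF \<mu>] .
  have "measure \<mu> X = (\<Sum>i\<in>{i. i < n \<and> x i \<in> X}. m i)"
    using mu_meas sets.top[of \<mu>] PspaceD(2)[OF \<mu>] by auto
  also have "{i. i < n \<and> x i \<in> X} = {..<n}" using x_in by auto
  finally show "(\<Sum>i<n. m i) = 1" using prob_space PspaceD(2)[OF \<mu>] by simp
  have singleton: "measure \<mu> {a} = (\<Sum>i\<in>{i. i < n \<and> x i = a}. m i)" if "a \<in> X" for a
    using mu_meas finite_in_sets_Pspace(1)[OF \<mu>, of "{a}"] that by auto
  show "measure \<mu> {x i} = m i" if "i < n"
  proof -
    have "{j. j < n \<and> x j = x i} = {i}" using x_inj that by (auto simp: inj_on_def)
    then show ?thesis using singleton[of "x i"] x_in that by simp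
  qed
  show "measure \<mu> {a} = 0" if "a \<notin> x ` {..<n}" "a \<in> X"
    using singleton[OF that(2)] that(1) by (auto intro!: sum.neutral)
qed

lemma mval_atomic:
  fixes X :: "'a::metric_space set"
  assumes \<mu>: "\<mu> \<in> Pspace X" and x_in: "\<forall>i<n. x i \<in> X" and x_inj: "inj_on x {..<n}"
    and m_pos: "\<forall>i<n. m i > 0"
    and mu_meas: "\<forall>A\<in>sets \<mu>. measure \<mu> A = (\<Sum>i\<in>{i. i < n \<and> x i \<in> A}. m i)"
    and U_disj: "\<forall>i<n. \<forall>j<n. i \<noteq> j \<longrightarrow> U i \<inter> U j = {}" and x_U: "\<forall>i<n. x i \<in> U i"
    and i: "i < n"
  shows "mval \<mu> (U i) = m i"
proof -
  note atom = measure_atom[OF \<mu> x_in x_inj mu_meas] measure_singleton_not_atom[OF \<mu> x_in x_inj mu_meas]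
  have "msupp \<mu> = x ` {..<n}"
    using atom m_pos x_in PspaceD(2)[OF \<mu>] by (force simp: msupp_def)
  moreover have "x ` {..<n} \<inter> U i = {x i}" using U_disj x_U i by blast
  ultimately show ?thesis using atom(1)[OF i] by (simp add: mval_def)
qed

theorem proposition4p8:
  fixes X :: "'a::metric_space set" and \<W> :: "'a set set"
    and n :: nat and x :: "nat \<Rightarrow> 'a" and m :: "nat \<Rightarrow> real" and \<mu> :: "'a measure"
    and U :: "nat \<Rightarrow> 'a set" and \<epsilon> r :: real and \<zeta> :: "'a measure"
  assumes X: "compact X"
    and W_open: "\<forall>W\<in>\<W>. openin (top_of_set X) W"
    and W_cover: "\<Union>\<W> = X"
    and W_bdd: "\<exists>D. \<forall>W\<in>\<W>. bounded W \<and> diameter W \<le> D"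
    and x_in: "\<forall>i<n. x i \<in> X"
    and x_inj: "inj_on x {..<n}"
    and m_pos: "\<forall>i<n. m i > 0"
    and mu_meas: "\<forall>A\<in>sets \<mu>. measure \<mu> A = (\<Sum>i\<in>{i. i < n \<and> x i \<in> A}. m i)"
    and mu_Viet: "\<mu> \<in> VietM X \<W>"
    and U_open: "\<forall>i<n. openin (top_of_set X) (U i)"
    and U_disj: "\<forall>i<n. \<forall>j<n. i \<noteq> j \<longrightarrow> U i \<inter> U j = {}"
    and x_U: "\<forall>i<n. x i \<in> U i"
    and U_W: "\<exists>W\<in>\<W>. (\<Union>i<n. U i) \<subseteq> W"
    and eps: "\<epsilon> > 0"
    and r: "r > 0"
    and zeta: "\<zeta> \<in> P_U X \<W> n U \<inter> {\<nu> \<in> VietM X \<W>. wasserstein X \<mu> \<nu> < r}"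
  shows "Fmap X \<W> \<mu> n U \<epsilon> \<zeta> \<noteq> {} \<and> mconvex (Fmap X \<W> \<mu> n U \<epsilon> \<zeta>)
         \<and> closedin (weak_top X) (Fmap X \<W> \<mu> n U \<epsilon> \<zeta>)"
proof -
  obtain W where W: "W \<in> \<W>" "(\<Union>i<n. U i) \<subseteq> W" using U_W by blast
  have \<zeta>: "\<zeta> \<in> VietM X \<W>" "\<forall>i<n. msupp \<zeta> \<inter> U i \<noteq> {}" using zeta by (auto simp: P_U_def)
  define S where "S = msupp \<zeta> \<inter> (\<Union>i<n. U i)"
  have S: "finite S" "S \<subseteq> X" using VietM_msupp[OF \<zeta>(1)] by (auto simp: S_def)
  have \<mu>: "\<mu> \<in> Pspace X" using mu_Viet by (simp add: VietM_def)
  have F: "Fmap X \<W> \<mu> n U \<epsilon> \<zeta> = mass_constraint_set X S n U m \<epsilon>"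
    unfolding S_def using \<zeta>(1) W
    by (rule Fmap_eq_mass_constraint_set) (rule mval_atomic[OF \<mu> x_in x_inj m_pos mu_meas U_disj x_U])
  have "mass_constraint_set X S n U m \<epsilon> \<noteq> {}"
  proof (rule mass_constraint_set_nonempty[OF S])
    show "S \<inter> U i \<noteq> {}" if "i < n" for i using \<zeta>(2) that by (auto simp: S_def)
    show "(\<Sum>i<n. m i) = 1" by (rule sum_atom_weights[OF \<mu> x_in x_inj mu_meas])
  qed (use U_disj m_pos eps in auto)
  moreover have "mconvex (mass_constraint_set X S n U m \<epsilon>)"
    by (rule mconvex_mass_constraint_set[OF S])
  moreover have "closedin (weak_top X) (mass_constraint_set X S n U m \<epsilon>)"
    by (rule closedin_mass_constraint_set[OF X S])
  ultimately show ?thesis using F by simp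
qed

end
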